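(* Let $n\geq 4$ and let $\mathcal{H}_{2n}$ be the collection of subsets of $\{1,\dots,2n\}$ of the form $\{1,2,2k-1,2k\}$ for $2\le k\le n$, or $\{2k-1,2k,2k+1,2k+2\}$ for $2\le k\le n-1$. Then the collection of all subsets $B\subset\{1,\dots,2n\}$ with $|B|=4$ and $B\notin\mathcal{H}_{2n}$ is the set of bases of a (rank-four) matroid on $\{1,\dots,2n\}$ (called the $2n$-Vámos matroid $V_{2n}$).
   Context: A matroid on a finite set $E$ is given by a nonempty collection of independent sets closed under taking subsets and satisfying the exchange axiom; its bases are the maximal independent sets. *)

theory Defs
  imports Main
begin

definition matroid :: "'a set \<Rightarrow> 'a set set \<Rightarrow> bool" where
  "matroid E \<I> \<longleftrightarrow> finite E \<and> (\<forall>X\<in>\<I>. X \<subseteq> E) \<and> \<I> \<noteq> {} \<and>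
     (\<forall>X Y. X \<in> \<I> \<and> Y \<subseteq> X \<longrightarrow> Y \<in> \<I>) \<and>
     (\<forall>X Y. X \<in> \<I> \<and> Y \<in> \<I> \<and> card X < card Y \<longrightarrow> (\<exists>y\<in>Y - X. insert y X \<in> \<I>))"

definition matroid_bases :: "'a set set \<Rightarrow> 'a set set" where
  "matroid_bases \<I> = {B \<in> \<I>. \<forall>X\<in>\<I>. B \<subseteq> X \<longrightarrow> X = B}"

definition vamos_H :: "nat \<Rightarrow> nat set set" where
  "vamos_H n = {{1, 2, 2*k - 1, 2*k} | k. 2 \<le> k \<and> k \<le> n} \<union>
               {{2*k - 1, 2*k, 2*k + 1, 2*k + 2} | k. 2 \<le> k \<and> k \<le> n - 1}"

end

theory Submission
  imports Defs
begin

text \<open>Every member of \<open>vamos_H n\<close> is the union of two of the pairs \<open>{2i - 1, 2i}\<close>, and distinct pairs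
  are disjoint. A 3-subset of such a union cannot fit inside one pair, so it meets both, and thus
  determines the member. Hence \<open>vamos_H n\<close> is a family of 4-sets no two of which share three
  elements; for any such family of \<open>r\<close>-sets (circuit-hyperplanes), the sets of size at most \<open>r\<close>
  outside the family are the independent sets of a sparse paving matroid whose bases are the
  \<open>r\<close>-sets outside the family.\<close>

definition sparse_paving_indep :: "'a set \<Rightarrow> nat \<Rightarrow> 'a set set \<Rightarrow> 'a set set" where
  "sparse_paving_indep E r H = {X. X \<subseteq> E \<and> card X \<le> r \<and> X \<notin> H}"

locale sparse_paving_family =
  fixes E :: "'a set" and r :: nat and H :: "'a set set"
  assumes finite_ground: "finite E"
    and card_member: "A \<in> H \<Longrightarrow> card A = r"
    and member_unique: "\<lbrakk>A \<in> H; B \<in> H; card X = r - 1; X \<subseteq> A; X \<subseteq> B\<rbrakk> \<Longrightarrow> A = B"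
begin

abbreviation "\<I> \<equiv> sparse_paving_indep E r H"

lemma finite_indep: "X \<in> \<I> \<Longrightarrow> finite X"
  using finite_ground by (auto simp: sparse_paving_indep_def intro: finite_subset)

lemma indep_exchange:
  assumes X: "X \<in> \<I>" and Y: "Y \<in> \<I>" and lt: "card X < card Y"
  shows "\<exists>y\<in>Y - X. insert y X \<in> \<I>"
proof (rule ccontr)
  assume no_exchange: "\<not> ?thesis"
  have fin: "finite X" "finite Y" using X Y by (simp_all add: finite_indep)
  have "card Y \<le> r" using Y by (simp add: sparse_paving_indep_def)
  have in_H: "insert y X \<in> H" if "y \<in> Y - X" for y
    using no_exchange that X Y lt fin(1) by (auto simp: sparse_paving_indep_def)
  have "\<not> Y \<subseteq> X" using lt card_mono[OF fin(1)] by (meson not_le)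
  then obtain y where y: "y \<in> Y - X" by blast
  have "card (insert y X) = r" using card_member[OF in_H[OF y]] .
  hence cX: "card X = r - 1" and cY: "card Y = card X + 1"
    using y fin(1) lt \<open>card Y \<le> r\<close> by auto
  have "Y - X = {y}"
    using member_unique[OF in_H[OF y] in_H cX] y by blast
  hence "card (Y \<inter> X) = card X"
    using card_Int_Diff[OF fin(2), of X] cY by simp
  hence "Y \<inter> X = X"
    using card_subset_eq[OF fin(1)] by blast
  hence "Y = insert y X" using \<open>Y - X = {y}\<close> by blast
  thus False using in_H[OF y] Y by (simp add: sparse_paving_indep_def)
qed

lemma matroid_indep:
  assumes "0 < r"
  shows "matroid E \<I>"
  unfolding matroid_def
proof (intro conjI allI impI ballI)
  show "finite E" by (rule finite_ground)
  show "X \<subseteq> E" if "X \<in> \<I>" for X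
    using that by (simp add: sparse_paving_indep_def)
  have "{} \<notin> H" using card_member[of "{}"] assms by auto
  then have "{} \<in> \<I>" by (simp add: sparse_paving_indep_def)
  then show "\<I> \<noteq> {}" by blast
next
  fix X Y assume XY: "X \<in> \<I> \<and> Y \<subseteq> X"
  hence X: "X \<subseteq> E" "card X \<le> r" "X \<notin> H" by (simp_all add: sparse_paving_indep_def)
  have "finite X" using XY finite_indep by blast
  have "card Y \<le> card X" using XY \<open>finite X\<close> card_mono by blast
  have "Y \<notin> H"
  proof
    assume "Y \<in> H"
    hence "card Y = r" by (rule card_member)
    hence "card Y = card X" using \<open>card Y \<le> card X\<close> X(2) by linarith
    hence "Y = X" using XY \<open>finite X\<close> card_subset_eq by blast
    thus False using \<open>Y \<in> H\<close> X(3) by simp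
  qed
  then show "Y \<in> \<I>"
    using XY X \<open>card Y \<le> card X\<close> by (auto simp: sparse_paving_indep_def)
next
  fix X Y assume "X \<in> \<I> \<and> Y \<in> \<I> \<and> card X < card Y"
  then show "\<exists>y\<in>Y - X. insert y X \<in> \<I>" by (elim conjE) (rule indep_exchange)
qed

lemma matroid_bases_indep:
  assumes "Z \<subseteq> E" "card Z = r" "Z \<notin> H"
  shows "matroid_bases \<I> = {B. B \<subseteq> E \<and> card B = r \<and> B \<notin> H}"
proof (intro set_eqI iffI)
  fix B assume "B \<in> matroid_bases \<I>"
  hence B: "B \<in> \<I>" and maximal: "\<And>X. X \<in> \<I> \<Longrightarrow> B \<subseteq> X \<Longrightarrow> X = B"
    unfolding matroid_bases_def by auto
  have "Z \<in> \<I>" using assms by (simp add: sparse_paving_indep_def)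
  have "card B = r"
  proof (rule ccontr)
    assume "card B \<noteq> r"
    hence "card B < card Z" using B assms(2) by (simp add: sparse_paving_indep_def)
    then obtain y where "y \<in> Z - B" "insert y B \<in> \<I>"
      using indep_exchange[OF B \<open>Z \<in> \<I>\<close>] by blast
    thus False using maximal[of "insert y B"] by blast
  qed
  thus "B \<in> {B. B \<subseteq> E \<and> card B = r \<and> B \<notin> H}"
    using B by (simp add: sparse_paving_indep_def)
next
  fix B assume "B \<in> {B. B \<subseteq> E \<and> card B = r \<and> B \<notin> H}"
  hence B: "B \<in> \<I>" "card B = r" by (simp_all add: sparse_paving_indep_def)
  have "X = B" if "X \<in> \<I>" "B \<subseteq> X" for X
  proof -
    have "card X \<le> card B" using that(1) B(2) by (simp add: sparse_paving_indep_def)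
    thus ?thesis using card_seteq[OF finite_indep[OF that(1)] that(2)] by simp
  qed
  thus "B \<in> matroid_bases \<I>"
    using B unfolding matroid_bases_def by blast
qed

end

definition vamos_pair :: "nat \<Rightarrow> nat set" where
  "vamos_pair i = {2*i - 1, 2*i}"

lemma card_vamos_pair_le: "card (vamos_pair i) \<le> 2"
  unfolding vamos_pair_def by (simp add: card_insert_if)

lemma vamos_pair_eqI:
  assumes "1 \<le> i" "1 \<le> j" "vamos_pair i \<inter> vamos_pair j \<noteq> {}"
  shows "i = j"
  using assms unfolding vamos_pair_def by auto

lemma vamos_H_union_pairs:
  assumes "A \<in> vamos_H n"
  obtains i j where "1 \<le> i" "1 \<le> j" "i \<noteq> j" "A = vamos_pair i \<union> vamos_pair j"
proof -
  have "\<exists>i j. 1 \<le> i \<and> 1 \<le> j \<and> i \<noteq> j \<and> A = vamos_pair i \<union> vamos_pair j"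
    using assms unfolding vamos_H_def
  proof (elim UnE CollectE exE conjE)
    fix k assume "A = {1, 2, 2*k - 1, 2*k}" "2 \<le> k"
    thus ?thesis by (intro exI[of _ 1] exI[of _ k]) (auto simp: vamos_pair_def)
  next
    fix k assume "A = {2*k - 1, 2*k, 2*k + 1, 2*k + 2}" "2 \<le> k"
    moreover have "2 * Suc k - 1 = 2*k + 1" by simp
    ultimately show ?thesis
      by (intro exI[of _ k] exI[of _ "Suc k"]) (auto simp: vamos_pair_def)
  qed
  thus thesis using that by blast
qed

lemma card_union_vamos_pairs:
  assumes "1 \<le> i" "1 \<le> j" "i \<noteq> j"
  shows "card (vamos_pair i \<union> vamos_pair j) = 4"
proof -
  have fin: "finite (vamos_pair m)" for m by (simp add: vamos_pair_def)
  have "card (vamos_pair i) = 2" "card (vamos_pair j) = 2"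
    using assms by (auto simp: vamos_pair_def)
  moreover have "vamos_pair i \<inter> vamos_pair j = {}"
    using vamos_pair_eqI assms by blast
  ultimately show ?thesis
    using card_Un_disjoint[OF fin fin] by simp
qed

lemma triple_in_union_meets_vamos_pair:
  assumes "X \<subseteq> vamos_pair i \<union> vamos_pair j" "card X = 3"
  shows "X \<inter> vamos_pair i \<noteq> {}"
proof
  assume "X \<inter> vamos_pair i = {}"
  hence "X \<subseteq> vamos_pair j" using assms(1) by blast
  hence "card X \<le> 2"
    using card_mono[of "vamos_pair j" X] card_vamos_pair_le[of j]
    by (simp add: vamos_pair_def)
  thus False using assms(2) by simp
qed

lemma union_vamos_pairs_eq_of_triple:
  assumes ij: "1 \<le> i" "1 \<le> j" "i \<noteq> j" and kl: "1 \<le> k" "1 \<le> l"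
    and X: "card X = 3" "X \<subseteq> vamos_pair i \<union> vamos_pair j" "X \<subseteq> vamos_pair k \<union> vamos_pair l"
  shows "vamos_pair i \<union> vamos_pair j = vamos_pair k \<union> vamos_pair l"
proof -
  have index_in: "m \<in> {k, l}" if "1 \<le> m" "X \<inter> vamos_pair m \<noteq> {}" for m
  proof -
    have "vamos_pair m \<inter> vamos_pair k \<noteq> {} \<or> vamos_pair m \<inter> vamos_pair l \<noteq> {}"
      using that(2) X(3) by blast
    thus ?thesis using vamos_pair_eqI that(1) kl by blast
  qed
  have "i \<in> {k, l}" "j \<in> {k, l}"
    using index_in ij triple_in_union_meets_vamos_pair[OF X(2,1)]
      triple_in_union_meets_vamos_pair[of X j i] X(1,2) by (auto simp: Un_commute)
  hence "{i, j} = {k, l}" using ij(3) by auto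
  thus ?thesis by (metis doubleton_eq_iff sup_commute)
qed

lemma sparse_paving_family_vamos_H: "sparse_paving_family {1..2*n} 4 (vamos_H n)"
proof
  show "finite {1..2*n}" by simp
next
  fix A assume "A \<in> vamos_H n"
  then obtain i j where "1 \<le> i" "1 \<le> j" "i \<noteq> j" "A = vamos_pair i \<union> vamos_pair j"
    by (rule vamos_H_union_pairs)
  thus "card A = 4" using card_union_vamos_pairs by simp
next
  fix A B X assume "A \<in> vamos_H n" "B \<in> vamos_H n" and X: "card X = 4 - 1" "X \<subseteq> A" "X \<subseteq> B"
  obtain i j where "1 \<le> i" "1 \<le> j" "i \<noteq> j" "A = vamos_pair i \<union> vamos_pair j"
    using \<open>A \<in> vamos_H n\<close> by (rule vamos_H_union_pairs)
  moreover obtain k l where "1 \<le> k" "1 \<le> l" "B = vamos_pair k \<union> vamos_pair l"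
    using \<open>B \<in> vamos_H n\<close> by (rule vamos_H_union_pairs)
  ultimately show "A = B"
    using union_vamos_pairs_eq_of_triple X by simp
qed

lemma odd_quadruple_notin_vamos_H: "{1, 3, 5, 7} \<notin> vamos_H n"
proof
  assume "{1, 3, 5, 7} \<in> vamos_H n"
  then obtain i j where "{1, 3, 5, 7} = vamos_pair i \<union> vamos_pair j"
    by (elim vamos_H_union_pairs)
  moreover have "2*i \<in> vamos_pair i" by (simp add: vamos_pair_def)
  ultimately have "2*i = 1 \<or> 2*i = 3 \<or> 2*i = 5 \<or> 2*i = (7::nat)" by blast
  thus False by presburger
qed

theorem proposition3p2:
  fixes n :: nat
  assumes "n \<ge> 4"
  shows "\<exists>\<I>. matroid {1..2*n} \<I> \<and>
           matroid_bases \<I> = {B. B \<subseteq> {1..2*n} \<and> card B = 4 \<and> B \<notin> vamos_H n}"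
proof -
  interpret sparse_paving_family "{1..2*n}" 4 "vamos_H n"
    by (rule sparse_paving_family_vamos_H)
  have "{1, 3, 5, 7} \<subseteq> {1..2*n}" "card {1, 3, 5, 7::nat} = 4" using assms by auto
  then have "matroid_bases \<I> = {B. B \<subseteq> {1..2*n} \<and> card B = 4 \<and> B \<notin> vamos_H n}"
    using odd_quadruple_notin_vamos_H by (rule matroid_bases_indep)
  moreover have "matroid {1..2*n} \<I>" by (rule matroid_indep) simp
  ultimately show ?thesis by blast
qed

end
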